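(* Assume $b<0$ and $a>0$, and let $(J,E)\in D_1$. Then, as $E\to E_+(J)$, \[ \lim_{E\to E_+(J)}T(J,E)=+\infty,\qquad \lim_{E\to E_+(J)}\tilde M(J,E)=+\infty,\qquad \lim_{E\to E_+(J)}\frac{\tilde M(J,E)}{T(J,E)}=\frac{q^2-a}{2b}, \] \[ \lim_{E\to E_+(J)}\tilde P(J,E)=+\infty,\qquad \lim_{E\to E_+(J)}\frac{\tilde P(J,E)}{T(J,E)}=\frac{q(q^2-a)}{2b}. \]
   Context: Consider the profile equation $u_{xx}+au+b|u|^2u=0$ (defocusing case $b<0$, with $a>0$), with conserved angular momentum $J=\Im(u\bar u_x)$ and energy $E=\frac12|u_x|^2+\frac a2|u|^2+\frac b4|u|^4$; without loss of generality $J\ge 0$. Writing $u=re^{i\phi}$, one has $E=\frac{r_x^2}{2}+V_J(r)$ with potential $V_J(r)=\frac{J^2}{2r^2}+a\frac{r^2}{2}+b\frac{r^4}{4}$. For $0<J<\sqrt{\frac{4}{27}\frac{a^3}{b^2}}$, parametrize $J=q\frac{q^2-a}{b}=Q\frac{Q^2-a}{b}$ with $0<q^2<\frac a3<Q^2<a$ ($q,Q$ of the same sign as $J$), and set $E_-(J)=\frac{1}{4b}(Q^2-a)(3Q^2+a)$ (local minimum value of $V_J$) and $E_+(J)=\frac{1}{4b}(q^2-a)(3q^2+a)$ (local maximum value of $V_J$). The domain is $D_1=\{(J,E)\in\mathbb R^2:0<J<\sqrt{\frac{4}{27}\frac{a^3}{b^2}},\ E_-(J)<E<E_+(J)\}$.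 For $(J,E)\in D_1$, let $r_1<r_2<r_3$ be the three positive roots of $E-V_J(r)$, and define the period, mass and momentum of the corresponding solution by $T(J,E)=2\int_{r_1}^{r_2}\frac{dr}{\sqrt{2(E-V_J(r))}}$, $\tilde M(J,E)=\frac12\int_0^{T}|u|^2dx=\int_{r_1}^{r_2}\frac{r^2\,dr}{\sqrt{2(E-V_J(r))}}$, $\tilde P(J,E)=\frac12\Im\int_0^T u\bar u_x\,dx=\frac12 T(J,E)J$. *)

theory Defs
  imports "HOL-Analysis.Analysis"
begin

definition VJ :: "real \<Rightarrow> real \<Rightarrow> real \<Rightarrow> real \<Rightarrow> real" where
  "VJ a b J r = J\<^sup>2 / (2 * r\<^sup>2) + a * r\<^sup>2 / 2 + b * r ^ 4 / 4"

definition roots :: "real \<Rightarrow> real \<Rightarrow> real \<Rightarrow> real \<Rightarrow> real set" where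
  "roots a b J E = {r. r > 0 \<and> E - VJ a b J r = 0}"

text \<open>r1 < r2 are the two smallest positive roots (of the three r1 < r2 < r3).\<close>
definition r1 :: "real \<Rightarrow> real \<Rightarrow> real \<Rightarrow> real \<Rightarrow> real" where
  "r1 a b J E = Min (roots a b J E)"

definition r2 :: "real \<Rightarrow> real \<Rightarrow> real \<Rightarrow> real \<Rightarrow> real" where
  "r2 a b J E = Min (roots a b J E - {r1 a b J E})"

definition period :: "real \<Rightarrow> real \<Rightarrow> real \<Rightarrow> real \<Rightarrow> real" where
  "period a b J E =
     2 * integral {r1 a b J E .. r2 a b J E} (\<lambda>r. 1 / sqrt (2 * (E - VJ a b J r)))"

definition mass :: "real \<Rightarrow> real \<Rightarrow> real \<Rightarrow> real \<Rightarrow> real" where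
  "mass a b J E =
     integral {r1 a b J E .. r2 a b J E} (\<lambda>r. r\<^sup>2 / sqrt (2 * (E - VJ a b J r)))"

definition momentum :: "real \<Rightarrow> real \<Rightarrow> real \<Rightarrow> real \<Rightarrow> real" where
  "momentum a b J E = period a b J E * J / 2"

text \<open>E_+(J) = (q^2 - a)(3 q^2 + a)/(4 b), local maximum value of V_J.\<close>
definition Eplus :: "real \<Rightarrow> real \<Rightarrow> real \<Rightarrow> real" where
  "Eplus a b q = (q\<^sup>2 - a) * (3 * q\<^sup>2 + a) / (4 * b)"

end

theory Submission
  imports Defs
begin

(*
  In the variable s = r^2, s (E - V_J(r)) is a cubic in s. At E = E_+ it equals
  -b/4 (s - smax)^2 (s - s0), where smax = (q^2 - a)/b is the square of the radius of the local
  maximum of V_J. Slightly below E_+ the cubic has roots s0 < s1 < s2 < smax < s3, the turning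
  points are r1 = sqrt s1 and r2 = sqrt s2, and r2 tends to sqrt smax as E tends to E_+.

  Two bounds on E - V_J do the work. From above, E - V_J(r) <= -b smax (sqrt smax - r)^2, so the
  period integrand is at least a multiple of 1/(sqrt smax - r) and T grows like
  -ln (sqrt smax - r2). From below, E - V_J(r) >= K (r - r1) (r2 - r) (smax - r^2) with K
  independent of E, so (r^2 - smax)/sqrt (2 (E - V_J)) is dominated by a fixed multiple of the
  arcsine weight 1/sqrt ((r - r1) (r2 - r)), whose integral is pi. Hence M - smax/2 T stays
  bounded, which yields the limits of M and M/T, while P/T = J/2 identically.
*)

lemma has_integral_arcsine_weight:
  fixes \<alpha> \<beta> :: real
  assumes "\<alpha> < \<beta>"
  shows "((\<lambda>r. 1 / sqrt ((r - \<alpha>) * (\<beta> - r))) has_integral pi) {\<alpha>..\<beta>}"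
proof -
  define c where "c = 2 / (\<beta> - \<alpha>)"
  define u where "u r = c * r - (\<alpha> + \<beta>) / (\<beta> - \<alpha>)" for r
  have u_bounds: "-1 \<le> u r \<and> u r \<le> 1" if "r \<in> {\<alpha>..\<beta>}" for r
    using that assms by (auto simp: u_def c_def divide_simps)
  have one_minus_u2: "1 - (u r)\<^sup>2 = c\<^sup>2 * ((r - \<alpha>) * (\<beta> - r))" for r
    using assms by (simp add: u_def c_def divide_simps power2_eq_square) (simp add: algebra_simps)
  have "((\<lambda>r. 1 / sqrt ((r - \<alpha>) * (\<beta> - r))) has_integral arcsin (u \<beta>) - arcsin (u \<alpha>)) {\<alpha>..\<beta>}"
  proof (rule fundamental_theorem_of_calculus_interior)
    show "\<alpha> \<le> \<beta>" using assms by simp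
    show "continuous_on {\<alpha>..\<beta>} (\<lambda>r. arcsin (u r))"
      using u_bounds unfolding u_def by (intro continuous_on_arcsin continuous_intros) auto
    fix x assume x: "x \<in> {\<alpha><..<\<beta>}"
    then have "-1 < u x" "u x < 1"
      using assms by (auto simp: u_def c_def divide_simps)
    moreover have "(u has_real_derivative c) (at x)"
      unfolding u_def by (auto intro!: derivative_eq_intros)
    ultimately have "((\<lambda>r. arcsin (u r)) has_real_derivative
        inverse (sqrt (1 - (u x)\<^sup>2)) * c) (at x)"
      by (rule DERIV_chain2[OF DERIV_arcsin])
    moreover have "inverse (sqrt (1 - (u x)\<^sup>2)) * c = 1 / sqrt ((x - \<alpha>) * (\<beta> - x))"
    proof -
      have "c > 0" using assms by (simp add: c_def)
      then have "sqrt (1 - (u x)\<^sup>2) = c * sqrt ((x - \<alpha>) * (\<beta> - x))"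
        unfolding one_minus_u2 real_sqrt_mult by simp
      moreover have "sqrt ((x - \<alpha>) * (\<beta> - x)) > 0" using x by simp
      ultimately show ?thesis using \<open>c > 0\<close> by (simp add: field_simps)
    qed
    ultimately show "((\<lambda>r. arcsin (u r)) has_vector_derivative 1 / sqrt ((x - \<alpha>) * (\<beta> - x))) (at x)"
      by (simp add: has_real_derivative_iff_has_vector_derivative)
  qed
  moreover have "u \<beta> = 1" "u \<alpha> = -1"
    using assms by (simp_all add: u_def c_def divide_simps)
  ultimately show ?thesis by simp
qed

lemma dominated_by_arcsine_weight:
  fixes \<alpha> \<beta> C :: real and f :: "real \<Rightarrow> real"
  assumes "\<alpha> < \<beta>" and "continuous_on {\<alpha><..<\<beta>} f"
    and bound: "\<And>r. \<alpha> < r \<Longrightarrow> r < \<beta> \<Longrightarrow> \<bar>f r\<bar> \<le> C / sqrt ((r - \<alpha>) * (\<beta> - r))"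
  shows "f integrable_on {\<alpha>..\<beta>}" and "\<bar>integral {\<alpha>..\<beta>} f\<bar> \<le> C * pi"
proof -
  have weight: "((\<lambda>r. C * (1 / sqrt ((r - \<alpha>) * (\<beta> - r)))) has_integral C * pi) {\<alpha><..<\<beta>}"
    using has_integral_mult_right[OF has_integral_arcsine_weight[OF \<open>\<alpha> < \<beta>\<close>]]
    by (simp add: has_integral_Icc_iff_Ioo)
  then have weight_int: "(\<lambda>r. C * (1 / sqrt ((r - \<alpha>) * (\<beta> - r)))) integrable_on {\<alpha><..<\<beta>}"
    by blast
  have f_int: "f integrable_on {\<alpha><..<\<beta>}"
  proof (rule measurable_bounded_by_integrable_imp_integrable_real[OF _ weight_int])
    show "f \<in> borel_measurable (lebesgue_on {\<alpha><..<\<beta>})"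
      using assms(2) by (rule continuous_imp_measurable_on_sets_lebesgue) simp
  qed (use bound in auto)
  then show "f integrable_on {\<alpha>..\<beta>}"
    by (simp add: integrable_on_Icc_iff_Ioo)
  have "norm (integral {\<alpha><..<\<beta>} f) \<le> integral {\<alpha><..<\<beta>} (\<lambda>r. C * (1 / sqrt ((r - \<alpha>) * (\<beta> - r))))"
    by (rule integral_norm_bound_integral[OF f_int weight_int]) (use bound in auto)
  then show "\<bar>integral {\<alpha>..\<beta>} f\<bar> \<le> C * pi"
    using integral_unique[OF weight] by (simp add: integral_open_interval_real)
qed

lemma has_integral_inverse_distance:
  fixes x y R :: real
  assumes "x \<le> y" and "y < R"
  shows "((\<lambda>r. 1 / (R - r)) has_integral ln (R - x) - ln (R - y)) {x..y}"
proof -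
  have "((\<lambda>r. 1 / (R - r)) has_integral (- ln (R - y)) - (- ln (R - x))) {x..y}"
  proof (rule fundamental_theorem_of_calculus)
    fix r assume "r \<in> {x..y}"
    then have "R - r > 0" using assms by auto
    then have "((\<lambda>r. - ln (R - r)) has_real_derivative 1 / (R - r)) (at r)"
      by (auto intro!: derivative_eq_intros)
    then show "((\<lambda>r. - ln (R - r)) has_vector_derivative 1 / (R - r)) (at r within {x..y})"
      by (simp add: has_real_derivative_iff_has_vector_derivative has_vector_derivative_at_within)
  qed (use assms in simp)
  then show ?thesis by simp
qed

lemma cubic_factor_two_roots:
  fixes c0 c1 c2 c3 s1 s2 s :: real
  assumes "c3 \<noteq> 0" and "s1 \<noteq> s2"
    and "c3 * s1 ^ 3 + c2 * s1\<^sup>2 + c1 * s1 + c0 = 0"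
    and "c3 * s2 ^ 3 + c2 * s2\<^sup>2 + c1 * s2 + c0 = 0"
  shows "c3 * s ^ 3 + c2 * s\<^sup>2 + c1 * s + c0
    = c3 * (s - s1) * (s - s2) * (s - (- c2 / c3 - s1 - s2))"
proof -
  define p where "p t = c3 * t ^ 3 + c2 * t\<^sup>2 + c1 * t + c0" for t
  define q where "q t = c3 * (t\<^sup>2 + t * s1 + s1\<^sup>2) + c2 * (t + s1) + c1" for t
  have p_q: "p t = p s1 + (t - s1) * q t" for t
    by (simp add: p_def q_def algebra_simps power2_eq_square power3_eq_cube)
  have q_div: "q t = q s2 + (t - s2) * (c3 * (t + s1 + s2) + c2)" for t
    by (simp add: q_def algebra_simps power2_eq_square)
  have "q s2 = 0"
    using p_q[of s2] assms by (simp add: p_def)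
  then have "p s = (s - s1) * (s - s2) * (c3 * (s + s1 + s2) + c2)"
    using p_q[of s] q_div[of s] assms by (simp add: p_def)
  also have "c3 * (s + s1 + s2) + c2 = c3 * (s - (- c2 / c3 - s1 - s2))"
    using assms by (simp add: field_simps)
  finally show ?thesis by (simp add: p_def mult_ac)
qed

lemma root_factors_lower_bound:
  fixes c \<alpha> r \<beta> m s3 :: real
  assumes "0 \<le> c" "c \<le> \<alpha>" "\<alpha> < r" "r < \<beta>" "r\<^sup>2 \<le> m" "m \<le> s3"
  shows "4 * c\<^sup>2 * ((r - \<alpha>) * (\<beta> - r)) * (m - r\<^sup>2)
    \<le> (r\<^sup>2 - \<alpha>\<^sup>2) * (\<beta>\<^sup>2 - r\<^sup>2) * (s3 - r\<^sup>2)"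
proof -
  have diff_squares: "(y - x) * (2 * c) \<le> y\<^sup>2 - x\<^sup>2" if "c \<le> x" "x \<le> y" for x y
  proof -
    have "(y - x) * (2 * c) \<le> (y - x) * (y + x)"
      using that assms(1) by (intro mult_left_mono) auto
    then show ?thesis by (simp add: power2_eq_square algebra_simps)
  qed
  have left: "(r - \<alpha>) * (2 * c) \<le> r\<^sup>2 - \<alpha>\<^sup>2" and right: "(\<beta> - r) * (2 * c) \<le> \<beta>\<^sup>2 - r\<^sup>2"
    using assms by (auto intro!: diff_squares)
  have "0 \<le> (r - \<alpha>) * (2 * c)" "0 \<le> (\<beta> - r) * (2 * c)"
    using assms by simp_all
  then have "0 \<le> r\<^sup>2 - \<alpha>\<^sup>2" "0 \<le> \<beta>\<^sup>2 - r\<^sup>2"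
    using left right by linarith+
  then have "0 \<le> (r\<^sup>2 - \<alpha>\<^sup>2) * (\<beta>\<^sup>2 - r\<^sup>2)" by simp
  have two_factors: "((r - \<alpha>) * (2 * c)) * ((\<beta> - r) * (2 * c)) \<le> (r\<^sup>2 - \<alpha>\<^sup>2) * (\<beta>\<^sup>2 - r\<^sup>2)"
    by (rule mult_mono[OF left right]) fact+
  have "4 * c\<^sup>2 * ((r - \<alpha>) * (\<beta> - r)) * (m - r\<^sup>2)
      = ((r - \<alpha>) * (2 * c)) * ((\<beta> - r) * (2 * c)) * (m - r\<^sup>2)"
    by (simp add: algebra_simps power2_eq_square)
  also have "\<dots> \<le> (r\<^sup>2 - \<alpha>\<^sup>2) * (\<beta>\<^sup>2 - r\<^sup>2) * (s3 - r\<^sup>2)"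
    using assms \<open>0 \<le> (r\<^sup>2 - \<alpha>\<^sup>2) * (\<beta>\<^sup>2 - r\<^sup>2)\<close> by (intro mult_mono[OF two_factors]) auto
  finally show ?thesis .
qed

lemma abs_div_sqrt_le:
  fixes A w c x :: real
  assumes "A > 0" "w > 0" "c \<ge> 0" "x\<^sup>2 * w \<le> c\<^sup>2 * A"
  shows "\<bar>x / sqrt A\<bar> \<le> c / sqrt w"
proof -
  have "\<bar>x / sqrt A\<bar> = sqrt (x\<^sup>2 / A)" using assms by (simp add: real_sqrt_divide abs_div)
  also have "\<dots> \<le> sqrt (c\<^sup>2 / w)"
    using assms by (intro real_sqrt_le_mono) (simp add: divide_simps mult.commute)
  also have "\<dots> = c / sqrt w" using assms by (simp add: real_sqrt_divide)
  finally show ?thesis .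
qed

lemma filterlim_const_minus_ln_at_top:
  fixes f :: "'a \<Rightarrow> real"
  assumes "c > 0" and "filterlim f (at_right 0) F"
  shows "filterlim (\<lambda>x. c * (d - ln (f x))) at_top F"
proof -
  have "filterlim (\<lambda>x. - ln (f x)) at_top F"
    using filterlim_compose[OF ln_at_0 assms(2)] by (simp add: filterlim_uminus_at_bot)
  then have "filterlim (\<lambda>x. d + - ln (f x)) at_top F"
    by (rule filterlim_tendsto_add_at_top[OF tendsto_const])
  then show ?thesis
    using filterlim_tendsto_pos_mult_at_top[OF tendsto_const assms(1)] by simp
qed

lemma continuous_on_VJ: "0 \<notin> S \<Longrightarrow> continuous_on S (VJ a b J)"
  unfolding VJ_def[abs_def] by (intro continuous_intros) auto

section \<open>The energy cubic below \<open>E\<^sub>+\<close>\<close>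

locale near_separatrix =
  fixes a b J q :: real
  assumes b_neg: "b < 0"
    and q_pos: "q > 0" and q_sq_less: "q\<^sup>2 < a / 3"
    and J_eq: "J = q * (q\<^sup>2 - a) / b"
begin

definition smax :: real where "smax = (q\<^sup>2 - a) / b"

definition s0 :: real where "s0 = -2 * q\<^sup>2 / b"

definition smid :: real where "smid = (s0 + smax) / 2"

definition energy_cubic :: "real \<Rightarrow> real \<Rightarrow> real" where
  "energy_cubic E s = E * s - J\<^sup>2 / 2 - a * s\<^sup>2 / 2 - b * s ^ 3 / 4"

lemma s0_pos: "0 < s0"
  using b_neg q_pos by (simp add: s0_def divide_pos_neg)

lemma s0_less_smax: "s0 < smax"
proof -
  have "q\<^sup>2 - a < -2 * q\<^sup>2" using q_sq_less by simp
  from divide_strict_right_mono_neg[OF this b_neg] show ?thesis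
    by (simp add: s0_def smax_def)
qed

lemma smax_pos: "0 < smax"
  using s0_pos s0_less_smax by simp

lemma s0_less_smid: "s0 < smid" and smid_less_smax: "smid < smax"
  using s0_less_smax by (auto simp: smid_def)

lemma lower_bound_const_pos: "0 < - b * s0 / smax"
  using b_neg s0_pos smax_pos by (intro divide_pos_pos mult_pos_pos) auto

lemma energy_cubic_Eplus: "energy_cubic (Eplus a b q) s = - b / 4 * (s - smax)\<^sup>2 * (s - s0)"
  using b_neg unfolding energy_cubic_def Eplus_def smax_def s0_def unfolding J_eq
  by (simp add: field_simps power2_eq_square power3_eq_cube)

lemma energy_cubic_shift:
  "energy_cubic E s = energy_cubic (Eplus a b q) s - (Eplus a b q - E) * s"
  unfolding energy_cubic_def by (simp add: algebra_simps)

lemma E_minus_VJ_eq_energy_cubic: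
  assumes "r > 0"
  shows "E - VJ a b J r = energy_cubic E (r\<^sup>2) / r\<^sup>2"
  using assms unfolding energy_cubic_def VJ_def
  by (simp add: field_simps power2_eq_square) (simp add: algebra_simps eval_nat_numeral)

text \<open>Below \<open>E\<^sub>+\<close> by less than \<open>energy_window\<close>, the cubic is still positive at \<open>smid\<close>,
  which separates its two smallest positive roots.\<close>

definition energy_window :: real where
  "energy_window = energy_cubic (Eplus a b q) smid / smid"

definition energy_range :: "real set" where
  "energy_range = {Eplus a b q - energy_window<..<Eplus a b q}"

lemma energy_window_pos: "0 < energy_window"
proof -
  have "0 < - b / 4 * (smid - smax)\<^sup>2 * (smid - s0)"
    using s0_less_smid smid_less_smax b_neg by (intro mult_pos_pos) auto
  then show ?thesis
    using s0_pos s0_less_smid by (simp add: energy_window_def energy_cubic_Eplus divide_neg_pos)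
qed

lemma eventually_energy_range: "eventually (\<lambda>E. E \<in> energy_range) (at_left (Eplus a b q))"
  unfolding energy_range_def using energy_window_pos by (intro eventually_at_left_real) simp

lemma energy_cubic_signs:
  assumes "E \<in> energy_range"
  shows "energy_cubic E s0 < 0" and "0 < energy_cubic E smid" and "energy_cubic E smax < 0"
proof -
  have E: "0 < Eplus a b q - E" "Eplus a b q - E < energy_window"
    using assms by (auto simp: energy_range_def)
  show "energy_cubic E s0 < 0"
    using E s0_pos energy_cubic_shift[of E s0] by (simp add: energy_cubic_Eplus)
  show "energy_cubic E smax < 0"
    using E smax_pos energy_cubic_shift[of E smax] by (simp add: energy_cubic_Eplus)
  have "(Eplus a b q - E) * smid < energy_window * smid"
    using E s0_pos s0_less_smid by simp
  then show "0 < energy_cubic E smid"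
    using s0_pos s0_less_smid energy_cubic_shift[of E smid] by (simp add: energy_window_def)
qed

lemma energy_cubic_factorization:
  assumes "E \<in> energy_range"
  obtains s1 s2 s3 where "s0 < s1" "s1 < smid" "smid < s2" "s2 < smax" "smax < s3"
    and "\<And>s. energy_cubic E s = - b / 4 * (s - s1) * (s - s2) * (s - s3)"
proof -
  note at_s0 = energy_cubic_signs(1)[OF assms]
    and at_smid = energy_cubic_signs(2)[OF assms]
    and at_smax = energy_cubic_signs(3)[OF assms]
  have cont: "continuous_on X (energy_cubic E)" for X
    unfolding energy_cubic_def by (intro continuous_intros) auto
  obtain s1 where s1: "s0 \<le> s1" "s1 \<le> smid" "energy_cubic E s1 = 0"
    using IVT'[of "energy_cubic E" s0 0 smid] at_s0 at_smid s0_less_smid cont by auto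
  obtain s2 where s2: "smid \<le> s2" "s2 \<le> smax" "energy_cubic E s2 = 0"
    using IVT2'[of "energy_cubic E" smax 0 smid] at_smax at_smid smid_less_smax cont by auto
  have s1_bounds: "s0 < s1" "s1 < smid" and s2_bounds: "smid < s2" "s2 < smax"
    using s1 s2 at_s0 at_smid at_smax by (auto simp: order.order_iff_strict)
  define s3 where "s3 = - 2 * a / b - s1 - s2"
  have coeffs: "energy_cubic E s = - b / 4 * s ^ 3 + - a / 2 * s\<^sup>2 + E * s + - J\<^sup>2 / 2" for s
    by (simp add: energy_cubic_def)
  have factored: "energy_cubic E s = - b / 4 * (s - s1) * (s - s2) * (s - s3)" for s
  proof -
    have "energy_cubic E s
        = - b / 4 * (s - s1) * (s - s2) * (s - (- (- a / 2) / (- b / 4) - s1 - s2))"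
      unfolding coeffs
      by (rule cubic_factor_two_roots) (use b_neg s1_bounds s2_bounds s1 s2 coeffs in auto)
    also have "- (- a / 2) / (- b / 4) = - 2 * a / b"
      using b_neg by (simp add: field_simps)
    finally show ?thesis by (simp only: s3_def)
  qed
  have "smax < s3"
  proof (rule ccontr)
    assume "\<not> smax < s3"
    then have "0 \<le> - b / 4 * (smax - s1) * (smax - s2) * (smax - s3)"
      using s1_bounds s2_bounds b_neg smid_less_smax by (intro mult_nonneg_nonneg) auto
    then show False using at_smax factored[of smax] by simp
  qed
  then show thesis using that s1_bounds s2_bounds factored by blast
qed

lemma r1_r2_eq_sqrt_roots:
  assumes "0 < s1" "s1 < s2" "s2 < s3"
    and factored: "\<And>s. energy_cubic E s = - b / 4 * (s - s1) * (s - s2) * (s - s3)"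
  shows "r1 a b J E = sqrt s1" and "r2 a b J E = sqrt s2"
proof -
  have roots_eq: "roots a b J E = {sqrt s1, sqrt s2, sqrt s3}"
  proof (intro set_eqI iffI)
    fix r assume "r \<in> roots a b J E"
    then have "r > 0" and "energy_cubic E (r\<^sup>2) = 0"
      using E_minus_VJ_eq_energy_cubic[of r E] by (auto simp: roots_def)
    then have "r\<^sup>2 = s1 \<or> r\<^sup>2 = s2 \<or> r\<^sup>2 = s3"
      using factored[of "r\<^sup>2"] b_neg by simp
    then show "r \<in> {sqrt s1, sqrt s2, sqrt s3}" using \<open>r > 0\<close> by auto
  next
    fix r assume "r \<in> {sqrt s1, sqrt s2, sqrt s3}"
    then have "r > 0" and "r\<^sup>2 = s1 \<or> r\<^sup>2 = s2 \<or> r\<^sup>2 = s3"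
      using assms by auto
    then show "r \<in> roots a b J E"
      using factored[of "r\<^sup>2"] E_minus_VJ_eq_energy_cubic[of r E] by (auto simp: roots_def)
  qed
  have "sqrt s1 < sqrt s2" "sqrt s2 < sqrt s3"
    using assms by simp_all
  then show r1_eq: "r1 a b J E = sqrt s1"
    unfolding r1_def roots_eq by (intro Min_eqI) auto
  then show "r2 a b J E = sqrt s2"
    using \<open>sqrt s1 < sqrt s2\<close> \<open>sqrt s2 < sqrt s3\<close>
    unfolding r2_def roots_eq by (intro Min_eqI) auto
qed

lemma E_minus_VJ_factorization:
  assumes "E \<in> energy_range"
  obtains s3 where "sqrt s0 < r1 a b J E" "r1 a b J E < sqrt smid"
    and "sqrt smid < r2 a b J E" "r2 a b J E < sqrt smax" "smax < s3"
    and "\<And>r. 0 < r \<Longrightarrow> E - VJ a b J r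
      = - b / 4 * ((r\<^sup>2 - (r1 a b J E)\<^sup>2) * ((r2 a b J E)\<^sup>2 - r\<^sup>2) * (s3 - r\<^sup>2)) / r\<^sup>2"
proof -
  obtain s1 s2 s3 where bounds: "s0 < s1" "s1 < smid" "smid < s2" "s2 < smax" "smax < s3"
    and factored: "\<And>s. energy_cubic E s = - b / 4 * (s - s1) * (s - s2) * (s - s3)"
    using energy_cubic_factorization[OF assms] by blast
  have "0 < s1" using bounds s0_pos by simp
  then have r1_eq: "r1 a b J E = sqrt s1" and r2_eq: "r2 a b J E = sqrt s2"
    using r1_r2_eq_sqrt_roots[OF _ _ _ factored] bounds by auto
  have "E - VJ a b J r = - b / 4 * ((r\<^sup>2 - s1) * (s2 - r\<^sup>2) * (s3 - r\<^sup>2)) / r\<^sup>2" if "0 < r" for r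
  proof -
    have flip: "(x - s2) * (x - s3) = (s2 - x) * (s3 - x)" for x :: real
      by (simp add: algebra_simps)
    have "energy_cubic E (r\<^sup>2) = - b / 4 * ((r\<^sup>2 - s1) * (s2 - r\<^sup>2) * (s3 - r\<^sup>2))"
      unfolding factored by (simp only: mult.assoc flip)
    then show ?thesis using E_minus_VJ_eq_energy_cubic[OF that, of E] by simp
  qed
  moreover have "(sqrt s1)\<^sup>2 = s1" "(sqrt s2)\<^sup>2 = s2"
    using \<open>0 < s1\<close> bounds by auto
  ultimately show thesis
    using that bounds \<open>0 < s1\<close> unfolding r1_eq r2_eq by auto
qed

lemma r1_r2_bounds:
  assumes "E \<in> energy_range"
  shows "0 < r1 a b J E" "r1 a b J E < sqrt smid" "sqrt smid < r2 a b J E" "r2 a b J E < sqrt smax"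
proof -
  have "0 \<le> sqrt s0" using s0_pos by simp
  then show "0 < r1 a b J E" "r1 a b J E < sqrt smid" "sqrt smid < r2 a b J E" "r2 a b J E < sqrt smax"
    using E_minus_VJ_factorization[OF assms] by (metis le_less_trans)+
qed

lemma E_minus_VJ_nonneg:
  assumes "E \<in> energy_range" and "r1 a b J E \<le> r" "r \<le> r2 a b J E"
  shows "0 \<le> E - VJ a b J r"
proof -
  define \<alpha> where "\<alpha> = r1 a b J E"
  define \<beta> where "\<beta> = r2 a b J E"
  obtain s3 where bounds: "sqrt s0 < \<alpha>" "\<beta> < sqrt smax" "smax < s3"
    and factored: "\<And>r. 0 < r \<Longrightarrow> E - VJ a b J r
      = - b / 4 * ((r\<^sup>2 - \<alpha>\<^sup>2) * (\<beta>\<^sup>2 - r\<^sup>2) * (s3 - r\<^sup>2)) / r\<^sup>2"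
    using E_minus_VJ_factorization[OF assms(1)] unfolding \<alpha>_def \<beta>_def by metis
  have r: "\<alpha> \<le> r" "r \<le> \<beta>" using assms by (simp_all add: \<alpha>_def \<beta>_def)
  have "0 \<le> sqrt s0" using s0_pos by simp
  then have "0 < \<alpha>" "0 < r" using bounds r by linarith+
  have "r\<^sup>2 < (sqrt smax)\<^sup>2"
    using r bounds \<open>0 < r\<close> by (intro power_strict_mono) auto
  then have "r\<^sup>2 < s3" using smax_pos bounds by simp
  moreover have "\<alpha>\<^sup>2 \<le> r\<^sup>2" "r\<^sup>2 \<le> \<beta>\<^sup>2"
    using r \<open>0 < \<alpha>\<close> \<open>0 < r\<close> by (auto intro: power_mono)
  ultimately have P: "0 \<le> (r\<^sup>2 - \<alpha>\<^sup>2) * (\<beta>\<^sup>2 - r\<^sup>2) * (s3 - r\<^sup>2)"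
    by (intro mult_nonneg_nonneg) auto
  have "0 \<le> - b / 4" using b_neg by simp
  then have "0 \<le> - b / 4 * ((r\<^sup>2 - \<alpha>\<^sup>2) * (\<beta>\<^sup>2 - r\<^sup>2) * (s3 - r\<^sup>2)) / r\<^sup>2"
    by (rule divide_nonneg_nonneg[OF mult_nonneg_nonneg[OF _ P]]) simp
  then show ?thesis
    using factored[OF \<open>0 < r\<close>] by simp
qed

lemma E_minus_VJ_lower_bound:
  assumes "E \<in> energy_range" and "r1 a b J E < r" "r < r2 a b J E"
  shows "- b * s0 / smax * ((r - r1 a b J E) * (r2 a b J E - r)) * (smax - r\<^sup>2) \<le> E - VJ a b J r"
proof -
  define \<alpha> where "\<alpha> = r1 a b J E"
  define \<beta> where "\<beta> = r2 a b J E"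
  obtain s3 where bounds: "sqrt s0 < \<alpha>" "\<beta> < sqrt smax" "smax < s3"
    and factored: "\<And>r. 0 < r \<Longrightarrow> E - VJ a b J r
      = - b / 4 * ((r\<^sup>2 - \<alpha>\<^sup>2) * (\<beta>\<^sup>2 - r\<^sup>2) * (s3 - r\<^sup>2)) / r\<^sup>2"
    using E_minus_VJ_factorization[OF assms(1)] unfolding \<alpha>_def \<beta>_def by metis
  have r: "\<alpha> < r" "r < \<beta>" using assms by (simp_all add: \<alpha>_def \<beta>_def)
  have "0 \<le> sqrt s0" using s0_pos by simp
  then have "0 < r" using bounds r by linarith
  have "r\<^sup>2 < (sqrt smax)\<^sup>2"
    using r bounds \<open>0 < r\<close> by (intro power_strict_mono) auto
  then have "r\<^sup>2 < smax" using smax_pos by simp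
  define P where "P = (r\<^sup>2 - \<alpha>\<^sup>2) * (\<beta>\<^sup>2 - r\<^sup>2) * (s3 - r\<^sup>2)"
  have product: "4 * s0 * ((r - \<alpha>) * (\<beta> - r)) * (smax - r\<^sup>2) \<le> P"
    using root_factors_lower_bound[of "sqrt s0" \<alpha> r \<beta> smax s3]
      \<open>0 \<le> sqrt s0\<close> bounds r \<open>r\<^sup>2 < smax\<close> s0_pos by (simp add: P_def)
  moreover have "0 \<le> 4 * s0 * ((r - \<alpha>) * (\<beta> - r)) * (smax - r\<^sup>2)"
    using s0_pos r \<open>r\<^sup>2 < smax\<close> by simp
  ultimately have "0 \<le> P" by linarith
  then have "0 \<le> - b / 4 * P"
    using b_neg by (intro mult_nonneg_nonneg) auto
  have "- b * s0 / smax * ((r - \<alpha>) * (\<beta> - r)) * (smax - r\<^sup>2)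
      = - b / 4 * (4 * s0 * ((r - \<alpha>) * (\<beta> - r)) * (smax - r\<^sup>2)) / smax"
    by simp
  also have "\<dots> \<le> - b / 4 * P / smax"
    using product b_neg smax_pos by (intro divide_right_mono mult_left_mono) auto
  also have "\<dots> \<le> - b / 4 * P / r\<^sup>2"
    by (rule divide_left_mono) (use \<open>0 \<le> - b / 4 * P\<close> \<open>0 < r\<close> \<open>r\<^sup>2 < smax\<close> smax_pos in auto)
  finally show ?thesis
    using factored[OF \<open>0 < r\<close>] by (simp add: P_def \<alpha>_def \<beta>_def)
qed

lemma E_minus_VJ_upper_bound:
  assumes "E \<le> Eplus a b q" and "0 < r" "r \<le> sqrt smax"
  shows "E - VJ a b J r \<le> - b * smax * (sqrt smax - r)\<^sup>2"
proof -
  have "E - VJ a b J r \<le> energy_cubic (Eplus a b q) (r\<^sup>2) / r\<^sup>2"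
    using E_minus_VJ_eq_energy_cubic[OF assms(2)] energy_cubic_shift[of E "r\<^sup>2"] assms
    by (simp add: divide_right_mono)
  also have "\<dots> = - b / 4 * (smax - r\<^sup>2)\<^sup>2 * ((r\<^sup>2 - s0) / r\<^sup>2)"
    by (simp add: energy_cubic_Eplus power2_commute)
  also have "\<dots> \<le> - b / 4 * (smax - r\<^sup>2)\<^sup>2"
  proof (rule mult_left_le)
    show "(r\<^sup>2 - s0) / r\<^sup>2 \<le> 1" using s0_pos assms by simp
    show "0 \<le> - b / 4 * (smax - r\<^sup>2)\<^sup>2" using b_neg by (intro mult_nonneg_nonneg) auto
  qed
  also have "\<dots> \<le> - b / 4 * (4 * smax * (sqrt smax - r)\<^sup>2)"
  proof -
    have "smax - r\<^sup>2 = (sqrt smax - r) * (sqrt smax + r)"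
      using smax_pos by (simp add: algebra_simps power2_eq_square)
    moreover have "(sqrt smax + r)\<^sup>2 \<le> (2 * sqrt smax)\<^sup>2"
      using assms by (intro power_mono) auto
    ultimately have "(smax - r\<^sup>2)\<^sup>2 \<le> (sqrt smax - r)\<^sup>2 * (2 * sqrt smax)\<^sup>2"
      by (simp add: power_mult_distrib mult_left_mono)
    also have "\<dots> = 4 * smax * (sqrt smax - r)\<^sup>2"
      using smax_pos by (simp add: power_mult_distrib)
    finally show ?thesis using b_neg by (simp add: mult_left_mono)
  qed
  finally show ?thesis by simp
qed

lemma E_minus_VJ_pos:
  assumes "E \<in> energy_range" and "r1 a b J E < r" "r < r2 a b J E"
  shows "0 < E - VJ a b J r"
proof -
  have "0 < r" "r < sqrt smax" using r1_r2_bounds[OF assms(1)] assms by linarith+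
  then have "r\<^sup>2 < (sqrt smax)\<^sup>2" by (intro power_strict_mono) auto
  then have "0 < - b * s0 / smax * ((r - r1 a b J E) * (r2 a b J E - r)) * (smax - r\<^sup>2)"
    using assms lower_bound_const_pos smax_pos by (intro mult_pos_pos) auto
  then show ?thesis using E_minus_VJ_lower_bound[OF assms] by linarith
qed

lemma continuous_on_div_sqrt_E_minus_VJ:
  assumes "E \<in> energy_range" and "continuous_on {r1 a b J E<..<r2 a b J E} \<phi>"
  shows "continuous_on {r1 a b J E<..<r2 a b J E} (\<lambda>r. \<phi> r / sqrt (2 * (E - VJ a b J r)))"
proof (intro continuous_intros assms(2) ballI)
  show "continuous_on {r1 a b J E<..<r2 a b J E} (VJ a b J)"
    using r1_r2_bounds(1)[OF assms(1)] by (intro continuous_on_VJ) auto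
  fix r assume "r \<in> {r1 a b J E<..<r2 a b J E}"
  then have "0 < E - VJ a b J r"
    using E_minus_VJ_pos[OF assms(1)] by simp
  then show "sqrt (2 * (E - VJ a b J r)) \<noteq> 0" by simp
qed

section \<open>Estimates for the period and mass integrals\<close>

lemma period_integrand_integrable:
  assumes "E \<in> energy_range"
  shows "(\<lambda>r. 1 / sqrt (2 * (E - VJ a b J r))) integrable_on {r1 a b J E..r2 a b J E}"
proof (rule dominated_by_arcsine_weight(1))
  \<comment> \<open>The dominating constant degenerates as \<open>E \<rightarrow> E\<^sub>+\<close>; only integrability is used.\<close>
  define \<alpha> where "\<alpha> = r1 a b J E"
  define \<beta> where "\<beta> = r2 a b J E"
  define K where "K = - b * s0 / smax"
  have "0 < K" using lower_bound_const_pos by (simp add: K_def)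
  have "\<beta> < sqrt smax" "0 < \<beta>" using r1_r2_bounds[OF assms] by (simp_all add: \<beta>_def)
  then have "\<beta>\<^sup>2 < smax"
    using power_strict_mono[of \<beta> "sqrt smax" 2] smax_pos by simp
  fix r assume r: "r1 a b J E < r" "r < r2 a b J E"
  then have w: "0 < (r - \<alpha>) * (\<beta> - r)" by (simp add: \<alpha>_def \<beta>_def)
  have "r\<^sup>2 \<le> \<beta>\<^sup>2"
    using r r1_r2_bounds(1)[OF assms] by (intro power_mono) (simp_all add: \<beta>_def)
  then have "K * ((r - \<alpha>) * (\<beta> - r)) * (smax - \<beta>\<^sup>2) \<le> K * ((r - \<alpha>) * (\<beta> - r)) * (smax - r\<^sup>2)"
    using \<open>0 < K\<close> w by (intro mult_left_mono) auto
  also have "\<dots> \<le> E - VJ a b J r"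
    using E_minus_VJ_lower_bound[OF assms r] by (simp add: K_def \<alpha>_def \<beta>_def)
  finally have "1\<^sup>2 * ((r - \<alpha>) * (\<beta> - r))
      \<le> (sqrt (1 / (2 * K * (smax - \<beta>\<^sup>2))))\<^sup>2 * (2 * (E - VJ a b J r))"
    using \<open>0 < K\<close> \<open>\<beta>\<^sup>2 < smax\<close> by (simp add: field_simps)
  then have "\<bar>1 / sqrt (2 * (E - VJ a b J r))\<bar>
      \<le> sqrt (1 / (2 * K * (smax - \<beta>\<^sup>2))) / sqrt ((r - \<alpha>) * (\<beta> - r))"
    using E_minus_VJ_pos[OF assms r] w \<open>0 < K\<close> \<open>\<beta>\<^sup>2 < smax\<close> by (intro abs_div_sqrt_le) auto
  then show "\<bar>1 / sqrt (2 * (E - VJ a b J r))\<bar>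
      \<le> sqrt (1 / (2 * K * (smax - \<beta>\<^sup>2))) / sqrt ((r - r1 a b J E) * (r2 a b J E - r))"
    by (simp only: \<alpha>_def \<beta>_def)
qed (use r1_r2_bounds[OF assms] continuous_on_div_sqrt_E_minus_VJ[OF assms continuous_on_const] in auto)

lemma mass_correction_integrand_bound:
  assumes "E \<in> energy_range" and "r1 a b J E < r" "r < r2 a b J E"
  shows "\<bar>(r\<^sup>2 - smax) / sqrt (2 * (E - VJ a b J r))\<bar>
    \<le> smax / sqrt (- 2 * b * s0) / sqrt ((r - r1 a b J E) * (r2 a b J E - r))"
proof -
  define w where "w = (r - r1 a b J E) * (r2 a b J E - r)"
  define K where "K = - b * s0 / smax"
  define C where "C = smax / sqrt (- 2 * b * s0)"
  have "0 < w" using assms by (simp add: w_def)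
  have "0 < - 2 * b * s0" using b_neg s0_pos by (simp add: mult_neg_pos)
  have "r < sqrt smax" "0 < r" using assms r1_r2_bounds[OF assms(1)] by linarith+
  then have "r\<^sup>2 < smax"
    using power_strict_mono[of r "sqrt smax" 2] smax_pos by simp
  have "(r\<^sup>2 - smax)\<^sup>2 = (smax - r\<^sup>2) * (smax - r\<^sup>2)"
    by (simp add: power2_eq_square algebra_simps)
  also have "\<dots> \<le> smax * (smax - r\<^sup>2)"
    using \<open>r\<^sup>2 < smax\<close> by (intro mult_right_mono) auto
  finally have "(r\<^sup>2 - smax)\<^sup>2 * w \<le> smax * (smax - r\<^sup>2) * w"
    using \<open>0 < w\<close> by (intro mult_right_mono) auto
  also have "\<dots> = C\<^sup>2 * (2 * (K * w * (smax - r\<^sup>2)))"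
  proof -
    from \<open>0 < - 2 * b * s0\<close> have "C\<^sup>2 * (2 * K) = smax"
      using b_neg s0_pos smax_pos by (simp add: C_def power_divide K_def field_simps power2_eq_square)
    moreover have "C\<^sup>2 * (2 * (K * w * (smax - r\<^sup>2))) = C\<^sup>2 * (2 * K) * ((smax - r\<^sup>2) * w)"
      by (simp only: mult_ac)
    ultimately show ?thesis by simp
  qed
  also have "\<dots> \<le> C\<^sup>2 * (2 * (E - VJ a b J r))"
    using E_minus_VJ_lower_bound[OF assms] by (intro mult_left_mono) (auto simp: K_def w_def)
  finally have "\<bar>(r\<^sup>2 - smax) / sqrt (2 * (E - VJ a b J r))\<bar> \<le> C / sqrt w"
    using E_minus_VJ_pos[OF assms] \<open>0 < w\<close> smax_pos \<open>0 < - 2 * b * s0\<close>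
    by (intro abs_div_sqrt_le) (auto simp: C_def)
  then show ?thesis by (simp only: C_def w_def)
qed

lemma mass_minus_half_smax_period:
  assumes "E \<in> energy_range"
  shows "\<bar>mass a b J E - smax / 2 * period a b J E\<bar> \<le> smax / sqrt (- 2 * b * s0) * pi"
proof -
  define \<alpha> where "\<alpha> = r1 a b J E"
  define \<beta> where "\<beta> = r2 a b J E"
  define f where "f = (\<lambda>r. 1 / sqrt (2 * (E - VJ a b J r)))"
  define g where "g = (\<lambda>r. (r\<^sup>2 - smax) / sqrt (2 * (E - VJ a b J r)))"
  have f_int: "f integrable_on {\<alpha>..\<beta>}"
    using period_integrand_integrable[OF assms] by (simp only: f_def \<alpha>_def \<beta>_def)
  have g_cont: "continuous_on {\<alpha><..<\<beta>} g"
    unfolding g_def \<alpha>_def \<beta>_def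
    by (intro continuous_on_div_sqrt_E_minus_VJ[OF assms] continuous_intros)
  have "\<alpha> < \<beta>" using r1_r2_bounds[OF assms] by (simp add: \<alpha>_def \<beta>_def)
  have g_bound: "\<bar>g r\<bar> \<le> smax / sqrt (- 2 * b * s0) / sqrt ((r - \<alpha>) * (\<beta> - r))"
    if "\<alpha> < r" "r < \<beta>" for r
    using mass_correction_integrand_bound[OF assms] that by (simp only: g_def \<alpha>_def \<beta>_def)
  note g_dominated = dominated_by_arcsine_weight[OF \<open>\<alpha> < \<beta>\<close> g_cont g_bound]
  have "mass a b J E = integral {\<alpha>..\<beta>} (\<lambda>r. g r + smax * f r)"
    unfolding mass_def \<alpha>_def \<beta>_def f_def g_def by (simp add: diff_divide_distrib)
  also have "\<dots> = integral {\<alpha>..\<beta>} g + smax * integral {\<alpha>..\<beta>} f"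
    using g_dominated(1) integrable_on_mult_right[OF f_int] by (simp add: integral_add)
  finally have "mass a b J E - smax / 2 * period a b J E = integral {\<alpha>..\<beta>} g"
    by (simp add: period_def f_def \<alpha>_def \<beta>_def)
  then show ?thesis using g_dominated(2) by simp
qed

lemma period_integrand_lower_bound:
  assumes "E \<in> energy_range" and "r1 a b J E < r" "r < r2 a b J E"
  shows "1 / sqrt (- 2 * b * smax) * (1 / (sqrt smax - r)) \<le> 1 / sqrt (2 * (E - VJ a b J r))"
proof -
  define k where "k = sqrt (- 2 * b * smax)"
  have "0 < - 2 * b * smax" using b_neg smax_pos by (simp add: mult_neg_pos)
  then have "0 < k" and k_sq: "k\<^sup>2 = - 2 * b * smax" by (simp_all add: k_def)
  have "0 < r" "r < sqrt smax" using assms r1_r2_bounds[OF assms(1)] by linarith+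
  have "E - VJ a b J r \<le> - b * smax * (sqrt smax - r)\<^sup>2"
    using E_minus_VJ_upper_bound[of E r] assms(1) \<open>0 < r\<close> \<open>r < sqrt smax\<close>
    by (simp add: energy_range_def)
  then have "2 * (E - VJ a b J r) \<le> (k * (sqrt smax - r))\<^sup>2"
    by (simp add: power_mult_distrib k_sq)
  moreover have "0 \<le> k * (sqrt smax - r)" using \<open>0 < k\<close> \<open>r < sqrt smax\<close> by simp
  ultimately have "sqrt (2 * (E - VJ a b J r)) \<le> k * (sqrt smax - r)"
    by (intro real_le_lsqrt)
  then have "1 / (k * (sqrt smax - r)) \<le> 1 / sqrt (2 * (E - VJ a b J r))"
    using E_minus_VJ_pos[OF assms] by (intro frac_le) auto
  then show ?thesis by (simp add: k_def)
qed

lemma period_lower_bound: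
  assumes "E \<in> energy_range"
  shows "2 / sqrt (- 2 * b * smax) * (ln (sqrt smax - sqrt smid) - ln (sqrt smax - r2 a b J E))
    \<le> period a b J E"
proof -
  define \<alpha> where "\<alpha> = r1 a b J E"
  define \<beta> where "\<beta> = r2 a b J E"
  define R where "R = sqrt smax"
  define k where "k = sqrt (- 2 * b * smax)"
  define f where "f = (\<lambda>r. 1 / sqrt (2 * (E - VJ a b J r)))"
  have bounds: "0 < \<alpha>" "\<alpha> < sqrt smid" "sqrt smid < \<beta>" "\<beta> < R"
    using r1_r2_bounds[OF assms] by (simp_all add: \<alpha>_def \<beta>_def R_def)
  have f_int: "f integrable_on {\<alpha>..\<beta>}"
    using period_integrand_integrable[OF assms] by (simp only: f_def \<alpha>_def \<beta>_def)
  then have f_int_tail: "f integrable_on {sqrt smid..\<beta>}"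
    by (rule integrable_on_subinterval) (use bounds in auto)
  have "((\<lambda>r. 1 / k * (1 / (R - r))) has_integral
      1 / k * (ln (R - sqrt smid) - ln (R - \<beta>))) {sqrt smid..\<beta>}"
    using bounds by (intro has_integral_mult_right has_integral_inverse_distance) auto
  have "1 / k * (ln (R - sqrt smid) - ln (R - \<beta>)) \<le> integral {sqrt smid<..<\<beta>} f"
  proof (rule has_integral_le[OF _ integrable_integral])
    show "((\<lambda>r. 1 / k * (1 / (R - r))) has_integral 1 / k * (ln (R - sqrt smid) - ln (R - \<beta>)))
        {sqrt smid<..<\<beta>}"
      using \<open>((\<lambda>r. 1 / k * (1 / (R - r))) has_integral _) {sqrt smid..\<beta>}\<close>
      by (simp only: has_integral_Icc_iff_Ioo)
    show "f integrable_on {sqrt smid<..<\<beta>}"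
      using f_int_tail by (simp only: integrable_on_Icc_iff_Ioo)
    show "1 / k * (1 / (R - r)) \<le> f r" if "r \<in> {sqrt smid<..<\<beta>}" for r
      using period_integrand_lower_bound[OF assms] that bounds
      by (simp add: f_def k_def R_def \<alpha>_def \<beta>_def)
  qed
  also have "\<dots> = integral {sqrt smid..\<beta>} f"
    by (rule integral_open_interval_real[symmetric])
  also have "\<dots> \<le> integral {\<alpha>..\<beta>} f"
  proof (rule integral_subset_le)
    show "\<forall>r\<in>{\<alpha>..\<beta>}. 0 \<le> f r"
      using E_minus_VJ_nonneg[OF assms] by (simp add: f_def \<alpha>_def \<beta>_def)
  qed (use f_int f_int_tail bounds in auto)
  finally have "1 / k * (ln (R - sqrt smid) - ln (R - \<beta>)) \<le> integral {\<alpha>..\<beta>} f" .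
  then show ?thesis
    unfolding period_def f_def \<alpha>_def \<beta>_def R_def k_def by linarith
qed

section \<open>Limits as \<open>E\<close> tends to \<open>E\<^sub>+\<close>\<close>

lemma r2_sq_gap:
  assumes "E \<in> energy_range"
  shows "(smax - (r2 a b J E)\<^sup>2)\<^sup>2 \<le> 4 * smax / (- b * (smid - s0)) * (Eplus a b q - E)"
proof -
  define \<beta> where "\<beta> = r2 a b J E"
  have bounds: "0 < \<beta>" "sqrt smid < \<beta>" "\<beta> < sqrt smax"
    using r1_r2_bounds[OF assms] by (simp_all add: \<beta>_def)
  have "smid < \<beta>\<^sup>2" "\<beta>\<^sup>2 < smax"
    using bounds s0_less_smid s0_pos smid_less_smax
      power_strict_mono[of "sqrt smid" \<beta> 2] power_strict_mono[of \<beta> "sqrt smax" 2] by auto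
  obtain s3 where "\<And>r. 0 < r \<Longrightarrow> E - VJ a b J r
      = - b / 4 * ((r\<^sup>2 - (r1 a b J E)\<^sup>2) * (\<beta>\<^sup>2 - r\<^sup>2) * (s3 - r\<^sup>2)) / r\<^sup>2"
    using E_minus_VJ_factorization[OF assms] unfolding \<beta>_def by metis
  then have "E - VJ a b J \<beta> = 0" using bounds by simp
  then have "energy_cubic E (\<beta>\<^sup>2) = 0"
    using E_minus_VJ_eq_energy_cubic[of \<beta> E] bounds by simp
  then have "- b / 4 * (smax - \<beta>\<^sup>2)\<^sup>2 * (\<beta>\<^sup>2 - s0) = (Eplus a b q - E) * \<beta>\<^sup>2"
    using energy_cubic_shift[of E "\<beta>\<^sup>2"] by (simp add: energy_cubic_Eplus power2_commute)
  moreover have "- b / 4 * (smax - \<beta>\<^sup>2)\<^sup>2 * (smid - s0) \<le> - b / 4 * (smax - \<beta>\<^sup>2)\<^sup>2 * (\<beta>\<^sup>2 - s0)"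
  proof (rule mult_left_mono)
    show "0 \<le> - b / 4 * (smax - \<beta>\<^sup>2)\<^sup>2" using b_neg by (intro mult_nonneg_nonneg) auto
  qed (use \<open>smid < \<beta>\<^sup>2\<close> in simp)
  moreover have "(Eplus a b q - E) * \<beta>\<^sup>2 \<le> (Eplus a b q - E) * smax"
    using assms \<open>\<beta>\<^sup>2 < smax\<close> by (intro mult_left_mono) (auto simp: energy_range_def)
  ultimately have "- b / 4 * (smax - \<beta>\<^sup>2)\<^sup>2 * (smid - s0) \<le> (Eplus a b q - E) * smax"
    by linarith
  then have "(smax - \<beta>\<^sup>2)\<^sup>2 * (- b * (smid - s0)) \<le> 4 * smax * (Eplus a b q - E)"
    by (simp add: field_simps)
  then show ?thesis
    using b_neg s0_less_smid by (simp add: \<beta>_def field_simps mult_neg_pos)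
qed

lemma r2_tendsto_sqrt_smax: "(r2 a b J \<longlongrightarrow> sqrt smax) (at_left (Eplus a b q))"
proof -
  define c where "c = 4 * smax / (- b * (smid - s0))"
  have "eventually (\<lambda>E. smax - sqrt (c * (Eplus a b q - E)) \<le> (r2 a b J E)\<^sup>2) (at_left (Eplus a b q))"
    using eventually_energy_range
  proof (rule eventually_mono)
    fix E assume "E \<in> energy_range"
    then have "smax - (r2 a b J E)\<^sup>2 \<le> sqrt (c * (Eplus a b q - E))"
      using r2_sq_gap by (simp add: c_def real_le_rsqrt)
    then show "smax - sqrt (c * (Eplus a b q - E)) \<le> (r2 a b J E)\<^sup>2" by simp
  qed
  moreover have "eventually (\<lambda>E. (r2 a b J E)\<^sup>2 \<le> smax) (at_left (Eplus a b q))"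
    using eventually_energy_range
  proof (rule eventually_mono)
    fix E assume "E \<in> energy_range"
    then have "0 < r2 a b J E" "r2 a b J E < sqrt smax"
      using r1_r2_bounds[of E] by linarith+
    then show "(r2 a b J E)\<^sup>2 \<le> smax"
      using power_mono[of "r2 a b J E" "sqrt smax" 2] smax_pos by simp
  qed
  moreover have "((\<lambda>E. smax - sqrt (c * (Eplus a b q - E))) \<longlongrightarrow> smax) (at_left (Eplus a b q))"
    by (auto intro!: tendsto_eq_intros)
  ultimately have "((\<lambda>E. (r2 a b J E)\<^sup>2) \<longlongrightarrow> smax) (at_left (Eplus a b q))"
    by (rule tendsto_sandwich) simp
  then have "((\<lambda>E. sqrt ((r2 a b J E)\<^sup>2)) \<longlongrightarrow> sqrt smax) (at_left (Eplus a b q))"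
    by (rule tendsto_real_sqrt)
  moreover have "eventually (\<lambda>E. sqrt ((r2 a b J E)\<^sup>2) = r2 a b J E) (at_left (Eplus a b q))"
    using eventually_energy_range
  proof (rule eventually_mono)
    fix E assume "E \<in> energy_range"
    then have "0 < r2 a b J E" using r1_r2_bounds[of E] by linarith
    then show "sqrt ((r2 a b J E)\<^sup>2) = r2 a b J E" by simp
  qed
  ultimately show ?thesis
    by (rule Lim_transform_eventually)
qed

lemma period_tendsto_at_top: "filterlim (period a b J) at_top (at_left (Eplus a b q))"
proof -
  have "filterlim (\<lambda>E. sqrt smax - r2 a b J E) (at_right 0) (at_left (Eplus a b q))"
  proof (rule tendsto_imp_filterlim_at_right)
    show "((\<lambda>E. sqrt smax - r2 a b J E) \<longlongrightarrow> 0) (at_left (Eplus a b q))"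
      using tendsto_diff[OF tendsto_const[of "sqrt smax"] r2_tendsto_sqrt_smax] by simp
    show "eventually (\<lambda>E. 0 < sqrt smax - r2 a b J E) (at_left (Eplus a b q))"
      using eventually_energy_range by (rule eventually_mono) (simp add: r1_r2_bounds)
  qed
  moreover have "0 < 2 / sqrt (- 2 * b * smax)"
    using b_neg smax_pos by (simp add: mult_neg_pos)
  ultimately have "filterlim (\<lambda>E. 2 / sqrt (- 2 * b * smax)
      * (ln (sqrt smax - sqrt smid) - ln (sqrt smax - r2 a b J E))) at_top (at_left (Eplus a b q))"
    by (intro filterlim_const_minus_ln_at_top)
  then show ?thesis
    by (rule filterlim_at_top_mono) (use eventually_energy_range period_lower_bound in
        \<open>auto elim: eventually_mono\<close>)
qed

lemma eventually_period_pos: "eventually (\<lambda>E. 0 < period a b J E) (at_left (Eplus a b q))"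
  using period_tendsto_at_top by (simp add: filterlim_at_top_dense)

lemma mass_tendsto_at_top: "filterlim (mass a b J) at_top (at_left (Eplus a b q))"
proof -
  define C where "C = smax / sqrt (- 2 * b * s0) * pi"
  have "filterlim (\<lambda>E. smax / 2 * period a b J E) at_top (at_left (Eplus a b q))"
    using smax_pos by (intro filterlim_tendsto_pos_mult_at_top[OF tendsto_const] period_tendsto_at_top) auto
  then have "filterlim (\<lambda>E. - C + smax / 2 * period a b J E) at_top (at_left (Eplus a b q))"
    by (rule filterlim_tendsto_add_at_top[OF tendsto_const])
  moreover have "eventually (\<lambda>E. - C + smax / 2 * period a b J E \<le> mass a b J E) (at_left (Eplus a b q))"
    using eventually_energy_range
  proof (rule eventually_mono)
    fix E assume "E \<in> energy_range"
    then show "- C + smax / 2 * period a b J E \<le> mass a b J E"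
      using mass_minus_half_smax_period[of E] by (simp add: C_def)
  qed
  ultimately show ?thesis
    by (rule filterlim_at_top_mono)
qed

lemma mass_div_period_tendsto: "((\<lambda>E. mass a b J E / period a b J E) \<longlongrightarrow> smax / 2) (at_left (Eplus a b q))"
proof -
  define C where "C = smax / sqrt (- 2 * b * s0) * pi"
  have "((\<lambda>E. mass a b J E / period a b J E - smax / 2) \<longlongrightarrow> 0) (at_left (Eplus a b q))"
  proof (rule Lim_null_comparison)
    show "eventually (\<lambda>E. norm (mass a b J E / period a b J E - smax / 2) \<le> C / period a b J E)
        (at_left (Eplus a b q))"
      using eventually_conj[OF eventually_energy_range eventually_period_pos]
    proof (rule eventually_mono)
      fix E assume E: "E \<in> energy_range \<and> 0 < period a b J E"
      then have "mass a b J E / period a b J E - smax / 2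
          = (mass a b J E - smax / 2 * period a b J E) / period a b J E"
        by (simp add: field_simps)
      moreover have "\<bar>mass a b J E - smax / 2 * period a b J E\<bar> / period a b J E \<le> C / period a b J E"
        using E mass_minus_half_smax_period[of E] by (intro divide_right_mono) (simp_all add: C_def)
      ultimately show "norm (mass a b J E / period a b J E - smax / 2) \<le> C / period a b J E"
        using E by (simp add: abs_div)
    qed
    show "((\<lambda>E. C / period a b J E) \<longlongrightarrow> 0) (at_left (Eplus a b q))"
      by (rule tendsto_divide_0[OF tendsto_const filterlim_at_top_imp_at_infinity[OF period_tendsto_at_top]])
  qed
  then show ?thesis by (rule LIM_zero_cancel)
qed

lemma J_pos: "0 < J"
proof -
  have "q\<^sup>2 < a" using q_sq_less zero_le_power2[of q] by linarith
  then have "q * (q\<^sup>2 - a) < 0" using q_pos by (intro mult_pos_neg) auto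
  then show ?thesis using b_neg by (simp add: J_eq divide_neg_neg)
qed

lemma momentum_tendsto_at_top: "filterlim (momentum a b J) at_top (at_left (Eplus a b q))"
proof -
  have "filterlim (\<lambda>E. J / 2 * period a b J E) at_top (at_left (Eplus a b q))"
    using J_pos by (intro filterlim_tendsto_pos_mult_at_top[OF tendsto_const _ period_tendsto_at_top]) simp
  moreover have "momentum a b J = (\<lambda>E. J / 2 * period a b J E)"
    by (simp add: momentum_def fun_eq_iff)
  ultimately show ?thesis by simp
qed

lemma momentum_div_period_tendsto:
  "((\<lambda>E. momentum a b J E / period a b J E) \<longlongrightarrow> J / 2) (at_left (Eplus a b q))"
proof (rule tendsto_eventually)
  show "eventually (\<lambda>E. momentum a b J E / period a b J E = J / 2) (at_left (Eplus a b q))"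
    using eventually_period_pos by (rule eventually_mono) (simp add: momentum_def)
qed

end

theorem proposition2:
  fixes a b J q :: real
  assumes "b < 0" and "a > 0"
    and "0 < J" and "J < sqrt (4 / 27 * a ^ 3 / b\<^sup>2)"
    and "q > 0" and "q\<^sup>2 < a / 3" and "J = q * (q\<^sup>2 - a) / b"
  shows "filterlim (\<lambda>E. period a b J E) at_top (at_left (Eplus a b q))
    \<and> filterlim (\<lambda>E. mass a b J E) at_top (at_left (Eplus a b q))
    \<and> ((\<lambda>E. mass a b J E / period a b J E) \<longlongrightarrow> (q\<^sup>2 - a) / (2 * b))
           (at_left (Eplus a b q))
    \<and> filterlim (\<lambda>E. momentum a b J E) at_top (at_left (Eplus a b q))
    \<and> ((\<lambda>E. momentum a b J E / period a b J E) \<longlongrightarrow> q * (q\<^sup>2 - a) / (2 * b))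
           (at_left (Eplus a b q))"
proof -
  \<comment> \<open>\<open>a > 0\<close>, \<open>J > 0\<close> and the upper bound on \<open>J\<close> are implied by the parametrisation of \<open>J\<close>
    by \<open>q\<close>.\<close>
  interpret near_separatrix a b J q
    using assms by unfold_locales auto
  have limits: "(q\<^sup>2 - a) / (2 * b) = smax / 2" "q * (q\<^sup>2 - a) / (2 * b) = J / 2"
    using assms(7) by (simp_all add: smax_def)
  show ?thesis
    unfolding limits
    using period_tendsto_at_top mass_tendsto_at_top mass_div_period_tendsto
      momentum_tendsto_at_top momentum_div_period_tendsto by blast
qed

end
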